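(* Let $P=\langle V,E,v_0\rangle$ be a CFA, let $\pi_1,\ldots,\pi_k$ be looping traces of $P$ with heads $v_1,\ldots,v_k$, let $\hat{\pi}_1,\ldots,\hat{\pi}_k$ be (possibly under-approximating) accelerators for them, and let $\hat{P}$ be the accelerated CFA obtained from $P$ by adding, for each $j$, a non-branching path from $v_j$ to $v_j$ labelled by $\hat{\pi}_j$. Then: (1) every trace of $P$ is subsumed by at least one trace of $\hat{P}$; (2) if $\rho_1$ is an accelerated trace accepted by $\hat{P}$ and $\langle\sigma_0,\sigma\rangle\in[\![\rho_1]\!]$, then there exists a trace $\rho_2$ accepted by $P$ with $\langle\sigma_0,\sigma\rangle\in[\![\rho_2]\!]$.
   Context: Programs are over a finite set of program variables; a state assigns a value to each variable. Statements are assignments $x:=e$, nondeterministic assignments $x:=*$, assumptions $[B]$ (identity restricted to states satisfying predicate $B$), and $\mathsf{skip}$; each statement $s$ denotes a relation $[\![s]\!]$ on states, and a trace (finite statement sequence) denotes the relational composition of its statements in order (empty trace: identity); $[\![\pi]\!]^0$ is the identity and $[\![\pi]\!]^n=[\![\pi]\!]\circ[\![\pi]\!]^{n-1}$. A CFA $P=\langle V,E,v_0\rangle$ has finite vertex set $V$, edges $E\subseteq V\times\mathsf{Stmts}_P\times V$ labelled with statements, and initial vertex $v_0$. A trace of a CFA is the label sequence of a path in it; it is looping with head $v$ if the path starts and ends at $v$, and accepted if the path starts at $v_0$. An accelerator for a looping trace $\pi$ is a statement sequence $\hat{\pi}$ with $[\![\hat{\pi}]\!]=\bigcup_{i\ge0}[\![\pi]\!]^i$;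 an under-approximating accelerator is a statement sequence $\hat{\pi}$ with a function $\beta$ from states to $\mathbb{N}_0$ such that $\langle\sigma,\sigma'\rangle\in[\![\hat{\pi}]\!]$ iff $\exists i\le\beta(\sigma)$ with $\langle\sigma,\sigma'\rangle\in[\![\pi]\!]^i$, where $\beta$ satisfies: $i\le\beta(\sigma)$ and $\langle\sigma,\sigma'\rangle\in[\![\pi]\!]^i$ imply $\beta(\sigma')\le\beta(\sigma)-i$. A trace of $\hat{P}$ is accelerated if it traverses one of the added accelerator paths. A trace $\rho$ is subsumed by a trace $\rho'$ if $[\![\rho]\!]\subseteq[\![\rho']\!]$. *)

theory Defs
  imports Main
begin

type_synonym ('x, 'd) state = "'x \<Rightarrow> 'd"

datatype ('x, 'd) stmt =
    Assign 'x "('x, 'd) state \<Rightarrow> 'd"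
  | Havoc 'x
  | Assume "('x, 'd) state \<Rightarrow> bool"
  | Skip

fun sem :: "('x, 'd) stmt \<Rightarrow> (('x, 'd) state) rel" where
  "sem (Assign x e) = {(\<sigma>, \<sigma>(x := e \<sigma>)) | \<sigma>. True}"
| "sem (Havoc x) = {(\<sigma>, \<sigma>(x := v)) | \<sigma> v. True}"
| "sem (Assume B) = {(\<sigma>, \<sigma>) | \<sigma>. B \<sigma>}"
| "sem Skip = Id"

fun tsem :: "('x, 'd) stmt list \<Rightarrow> (('x, 'd) state) rel" where
  "tsem [] = Id"
| "tsem (s # ss) = sem s O tsem ss"

type_synonym ('v, 'x, 'd) cfa = "'v set \<times> ('v \<times> ('x, 'd) stmt \<times> 'v) set \<times> 'v"

definition is_cfa :: "('v, 'x, 'd) cfa \<Rightarrow> bool" where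
  "is_cfa P = (case P of (V, E, v0) \<Rightarrow> finite V \<and> E \<subseteq> V \<times> UNIV \<times> V \<and> v0 \<in> V)"

fun path :: "('v \<times> ('x, 'd) stmt \<times> 'v) set \<Rightarrow> 'v \<Rightarrow> ('x, 'd) stmt list \<Rightarrow> 'v \<Rightarrow> bool" where
  "path E u [] w = (u = w)"
| "path E u (s # ss) w = (\<exists>u'. (u, s, u') \<in> E \<and> path E u' ss w)"

definition is_trace :: "('v, 'x, 'd) cfa \<Rightarrow> ('x, 'd) stmt list \<Rightarrow> bool" where
  "is_trace P ss = (case P of (V, E, v0) \<Rightarrow> \<exists>u w. u \<in> V \<and> path E u ss w)"

definition looping_trace :: "('v, 'x, 'd) cfa \<Rightarrow> 'v \<Rightarrow> ('x, 'd) stmt list \<Rightarrow> bool" where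
  "looping_trace P v ss = (case P of (V, E, v0) \<Rightarrow> v \<in> V \<and> path E v ss v)"

definition accepted :: "('v, 'x, 'd) cfa \<Rightarrow> ('x, 'd) stmt list \<Rightarrow> bool" where
  "accepted P ss = (case P of (V, E, v0) \<Rightarrow> \<exists>w. path E v0 ss w)"

definition subsumed :: "('x, 'd) stmt list \<Rightarrow> ('x, 'd) stmt list \<Rightarrow> bool" where
  "subsumed \<rho> \<rho>' = (tsem \<rho> \<subseteq> tsem \<rho>')"

definition accelerator :: "('x, 'd) stmt list \<Rightarrow> ('x, 'd) stmt list \<Rightarrow> bool" where
  "accelerator \<pi> \<pi>h = (tsem \<pi>h = (\<Union>i. tsem \<pi> ^^ i))"

definition under_accelerator :: "('x, 'd) stmt list \<Rightarrow> ('x, 'd) stmt list \<Rightarrow> bool" where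
  "under_accelerator \<pi> \<pi>h = (\<exists>\<beta> :: ('x, 'd) state \<Rightarrow> nat.
      (\<forall>\<sigma> \<sigma>'. (\<sigma>, \<sigma>') \<in> tsem \<pi>h \<longleftrightarrow> (\<exists>i \<le> \<beta> \<sigma>. (\<sigma>, \<sigma>') \<in> tsem \<pi> ^^ i)) \<and>
      (\<forall>\<sigma> \<sigma>' i. i \<le> \<beta> \<sigma> \<and> (\<sigma>, \<sigma>') \<in> tsem \<pi> ^^ i \<longrightarrow> \<beta> \<sigma>' \<le> \<beta> \<sigma> - i))"

text \<open>Given k loops with heads hds j, accelerators pih j (j < k), the accelerated CFA has
vertices Inl v for original vertices and fresh vertices Inr (j, i) (0 < i < length (pih j))
for the interior of the added non-branching path from hds j to hds j labelled pih j.\<close>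

definition acc_node :: "(nat \<Rightarrow> 'v) \<Rightarrow> (nat \<Rightarrow> ('x, 'd) stmt list) \<Rightarrow> nat \<Rightarrow> nat \<Rightarrow> 'v + nat \<times> nat" where
  "acc_node hds pih j i = (if i = 0 \<or> i = length (pih j) then Inl (hds j) else Inr (j, i))"

definition acc_edges :: "nat \<Rightarrow> (nat \<Rightarrow> 'v) \<Rightarrow> (nat \<Rightarrow> ('x, 'd) stmt list)
    \<Rightarrow> (('v + nat \<times> nat) \<times> ('x, 'd) stmt \<times> ('v + nat \<times> nat)) set" where
  "acc_edges k hds pih = {(acc_node hds pih j i, pih j ! i, acc_node hds pih j (Suc i)) | j i.
      j < k \<and> i < length (pih j)}"

definition accelerated_cfa :: "('v, 'x, 'd) cfa \<Rightarrow> nat \<Rightarrow> (nat \<Rightarrow> 'v) \<Rightarrow> (nat \<Rightarrow> ('x, 'd) stmt list)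
    \<Rightarrow> ('v + nat \<times> nat, 'x, 'd) cfa" where
  "accelerated_cfa P k hds pih = (case P of (V, E, v0) \<Rightarrow>
     (Inl ` V \<union> {Inr (j, i) | j i. j < k \<and> 0 < i \<and> i < length (pih j)},
      {(Inl u, s, Inl w) | u s w. (u, s, w) \<in> E} \<union> acc_edges k hds pih,
      Inl v0))"

text \<open>A trace accepted by the accelerated CFA that is accelerated: it is the label of a path
from the initial vertex, ending at an original vertex (so every accelerator path entered is
traversed completely), that uses at least one edge of an added accelerator path.\<close>

fun path_e :: "('v \<times> ('x, 'd) stmt \<times> 'v) set \<Rightarrow> 'v \<Rightarrow> ('v \<times> ('x, 'd) stmt \<times> 'v) list \<Rightarrow> 'v \<Rightarrow> bool" where
  "path_e E u [] w = (u = w)"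
| "path_e E u (e # es) w = (e \<in> E \<and> fst e = u \<and> path_e E (snd (snd e)) es w)"

definition accelerated_accepted_trace :: "('v, 'x, 'd) cfa \<Rightarrow> nat \<Rightarrow> (nat \<Rightarrow> 'v)
    \<Rightarrow> (nat \<Rightarrow> ('x, 'd) stmt list) \<Rightarrow> ('x, 'd) stmt list \<Rightarrow> bool" where
  "accelerated_accepted_trace P k hds pih \<rho> = (case accelerated_cfa P k hds pih of (V', E', v0') \<Rightarrow>
     \<exists>es w. path_e E' v0' es (Inl w) \<and> map (fst \<circ> snd) es = \<rho> \<and>
            (\<exists>e \<in> set es. e \<in> acc_edges k hds pih))"

end

theory Submission
  imports Defs
begin

text \<open>Part (1) holds because \<open>P\<close> embeds into \<open>\<hat>P\<close> via \<open>Inl\<close>, so every trace of \<open>P\<close> is a trace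
of \<open>\<hat>P\<close>. For part (2), a path of \<open>\<hat>P\<close> ending at an original vertex decomposes into edges of \<open>P\<close>
and complete traversals of the added paths, since interior vertices of an added path have no
other outgoing edge. Each traversal of \<open>\<hat>\<pi>\<^sub>j\<close> relates states also related by some power
\<open>[[\<pi>\<^sub>j]]\<^sup>n\<close>, i.e. by the loop \<open>\<pi>\<^sub>j\<close> of \<open>P\<close> taken \<open>n\<close> times, which yields an accepted trace of \<open>P\<close>.\<close>

lemma tsem_append: "tsem (a @ b) = tsem a O tsem b"
  by (induction a) auto

lemma path_append: "path E u (a @ b) w \<longleftrightarrow> (\<exists>m. path E u a m \<and> path E m b w)"
  by (induction a arbitrary: u) auto

lemma tsem_concat_replicate: "tsem (concat (replicate n p)) = tsem p ^^ n"
  by (induction n) (simp_all add: tsem_append relpow_commute[symmetric])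

lemma path_concat_replicate: "path E h p h \<Longrightarrow> path E h (concat (replicate n p)) h"
  by (induction n) (auto simp: path_append)

lemma accelerator_tsem_subset: "accelerator p ph \<Longrightarrow> tsem ph \<subseteq> (\<Union>n. tsem p ^^ n)"
  by (simp add: accelerator_def)

lemma under_accelerator_tsem_subset: "under_accelerator p ph \<Longrightarrow> tsem ph \<subseteq> (\<Union>n. tsem p ^^ n)"
  unfolding under_accelerator_def by fast

lemma accelerated_step_realized_by_loop:
  assumes "path E h p h" and "tsem ph \<subseteq> (\<Union>n. tsem p ^^ n)" and "(\<sigma>, \<sigma>') \<in> tsem ph"
  shows "\<exists>\<rho>. path E h \<rho> h \<and> (\<sigma>, \<sigma>') \<in> tsem \<rho>"
proof -
  obtain n where "(\<sigma>, \<sigma>') \<in> tsem p ^^ n" using assms(2,3) by blast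
  then show ?thesis
    using path_concat_replicate[OF assms(1)] by (metis tsem_concat_replicate)
qed

definition lift_edges :: "('v \<times> ('x, 'd) stmt \<times> 'v) set \<Rightarrow> (('v + 'w) \<times> ('x, 'd) stmt \<times> ('v + 'w)) set" where
  "lift_edges E = {(Inl u, s, Inl w) | u s w. (u, s, w) \<in> E}"

lemma accelerated_cfa_eq:
  "accelerated_cfa (V, E, v0) k hds pih =
    (Inl ` V \<union> {Inr (j, i) | j i. j < k \<and> 0 < i \<and> i < length (pih j)},
     lift_edges E \<union> acc_edges k hds pih, Inl v0)"
  by (simp add: accelerated_cfa_def lift_edges_def)

lemma path_lift_edges: "path E u \<rho> w \<Longrightarrow> path (lift_edges E \<union> F) (Inl u) \<rho> (Inl w)"
  by (induction \<rho> arbitrary: u) (auto simp: lift_edges_def)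

lemma acc_node_eq_Inr_iff:
  "acc_node hds pih j i = Inr (j', i') \<longleftrightarrow> j' = j \<and> i' = i \<and> i \<noteq> 0 \<and> i \<noteq> length (pih j)"
  by (auto simp: acc_node_def)

lemma acc_node_eq_Inl_iff:
  "acc_node hds pih j i = Inl u \<longleftrightarrow> (i = 0 \<or> i = length (pih j)) \<and> u = hds j"
  by (auto simp: acc_node_def)

lemma out_edge_Inr:
  assumes "e \<in> lift_edges E \<union> acc_edges k hds pih" and "fst e = Inr (j, i)"
  shows "e = (Inr (j, i), pih j ! i, acc_node hds pih j (Suc i))"
  using assms by (auto simp: lift_edges_def acc_edges_def acc_node_eq_Inr_iff)

lemma acc_edge_from_Inl:
  assumes "e \<in> acc_edges k hds pih" and "fst e = Inl u"
  obtains j where "j < k" "u = hds j" "pih j \<noteq> []"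
    "e = (Inl (hds j), pih j ! 0, acc_node hds pih j (Suc 0))"
  using assms by (auto simp: acc_edges_def acc_node_eq_Inl_iff)

lemma path_e_acc_suffix:
  assumes "path_e (lift_edges E \<union> acc_edges k hds pih) (acc_node hds pih j i) es (Inl w)"
    and "0 < i" and "i \<le> length (pih j)"
  shows "\<exists>es1 es2. es = es1 @ es2 \<and> map (fst \<circ> snd) es1 = drop i (pih j) \<and>
     path_e (lift_edges E \<union> acc_edges k hds pih) (Inl (hds j)) es2 (Inl w)"
  using assms
proof (induction es arbitrary: i)
  case Nil
  then show ?case by (auto simp: acc_node_def split: if_splits)
next
  case (Cons e es)
  show ?case
  proof (cases "i = length (pih j)")
    case True
    then show ?thesis
      using Cons.prems by (intro exI[of _ "[]"] exI[of _ "e # es"]) (simp add: acc_node_def)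
  next
    case False
    with Cons.prems have node: "acc_node hds pih j i = Inr (j, i)" and i: "i < length (pih j)"
      by (auto simp: acc_node_def)
    with Cons.prems(1) have e: "e = (Inr (j, i), pih j ! i, acc_node hds pih j (Suc i))"
      by (intro out_edge_Inr[of _ E k]) auto
    with Cons.prems(1) node have
      "path_e (lift_edges E \<union> acc_edges k hds pih) (acc_node hds pih j (Suc i)) es (Inl w)"
      by simp
    with i obtain es1 es2 where "es = es1 @ es2" "map (fst \<circ> snd) es1 = drop (Suc i) (pih j)"
      and rest: "path_e (lift_edges E \<union> acc_edges k hds pih) (Inl (hds j)) es2 (Inl w)"
      using Cons.IH[of "Suc i"] by (meson Suc_leI zero_less_Suc)
    with e i have "e # es = (e # es1) @ es2" "map (fst \<circ> snd) (e # es1) = drop i (pih j)"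
      by (simp_all add: Cons_nth_drop_Suc)
    with rest show ?thesis by blast
  qed
qed

lemma accelerated_path_simulation:
  assumes realized: "\<And>j \<sigma> \<sigma>'. j < k \<Longrightarrow> (\<sigma>, \<sigma>') \<in> tsem (pih j) \<Longrightarrow>
      \<exists>\<rho>. path E (hds j) \<rho> (hds j) \<and> (\<sigma>, \<sigma>') \<in> tsem \<rho>"
  shows "path_e (lift_edges E \<union> acc_edges k hds pih) (Inl u) es (Inl w)
    \<Longrightarrow> (\<sigma>0, \<sigma>) \<in> tsem (map (fst \<circ> snd) es) \<Longrightarrow> \<exists>\<rho>. path E u \<rho> w \<and> (\<sigma>0, \<sigma>) \<in> tsem \<rho>"
proof (induction "length es" arbitrary: es u \<sigma>0 rule: less_induct)
  case less
  show ?case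
  proof (cases es)
    case Nil
    then show ?thesis using less.prems by (intro exI[of _ "[]"]) auto
  next
    case (Cons e es')
    have e: "e \<in> lift_edges E \<union> acc_edges k hds pih" "fst e = Inl u"
      and rest: "path_e (lift_edges E \<union> acc_edges k hds pih) (snd (snd e)) es' (Inl w)"
      using less.prems(1) Cons by simp_all
    show ?thesis
    proof (cases "e \<in> acc_edges k hds pih")
      case False
      with e obtain s v where "e = (Inl u, s, Inl v)" "(u, s, v) \<in> E"
        by (auto simp: lift_edges_def)
      moreover from this less.prems(2) Cons obtain \<sigma>1 where
        "(\<sigma>0, \<sigma>1) \<in> sem s" "(\<sigma>1, \<sigma>) \<in> tsem (map (fst \<circ> snd) es')" by auto
      moreover from calculation obtain \<rho> where "path E v \<rho> w" "(\<sigma>1, \<sigma>) \<in> tsem \<rho>"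
        using less.hyps[of es' v \<sigma>1] rest Cons by auto
      ultimately have "path E u (s # \<rho>) w" "(\<sigma>0, \<sigma>) \<in> tsem (s # \<rho>)" by auto
      then show ?thesis by blast
    next
      case True
      with e obtain j where j: "j < k" "u = hds j" "pih j \<noteq> []"
        and e_eq: "e = (Inl (hds j), pih j ! 0, acc_node hds pih j (Suc 0))"
        by (elim acc_edge_from_Inl)
      with rest have "path_e (lift_edges E \<union> acc_edges k hds pih) (acc_node hds pih j (Suc 0)) es' (Inl w)"
        by simp
      then have "\<exists>es1 es2. es' = es1 @ es2 \<and> map (fst \<circ> snd) es1 = drop (Suc 0) (pih j) \<and>
          path_e (lift_edges E \<union> acc_edges k hds pih) (Inl (hds j)) es2 (Inl w)"
        by (rule path_e_acc_suffix) (use j(3) in \<open>auto simp: Suc_le_eq\<close>)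
      then obtain es1 es2 where split: "es' = es1 @ es2"
        "map (fst \<circ> snd) es1 = drop (Suc 0) (pih j)"
        and rest2: "path_e (lift_edges E \<union> acc_edges k hds pih) (Inl (hds j)) es2 (Inl w)"
        by blast
      have "pih j ! 0 # drop (Suc 0) (pih j) = pih j"
        using j(3) by (cases "pih j") auto
      then have "map (fst \<circ> snd) es = pih j @ map (fst \<circ> snd) es2"
        using Cons split e_eq by simp
      with less.prems(2) obtain \<sigma>1 where
        s1: "(\<sigma>0, \<sigma>1) \<in> tsem (pih j)" and s2: "(\<sigma>1, \<sigma>) \<in> tsem (map (fst \<circ> snd) es2)"
        by (auto simp: tsem_append)
      obtain \<rho>1 where "path E u \<rho>1 u" "(\<sigma>0, \<sigma>1) \<in> tsem \<rho>1"
        using realized[OF j(1) s1] j(2) by blast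
      moreover obtain \<rho>2 where "path E u \<rho>2 w" "(\<sigma>1, \<sigma>) \<in> tsem \<rho>2"
        using less.hyps[of es2 "hds j" \<sigma>1] rest2 s2 Cons split j(2) by auto
      ultimately have "path E u (\<rho>1 @ \<rho>2) w" "(\<sigma>0, \<sigma>) \<in> tsem (\<rho>1 @ \<rho>2)"
        by (auto simp: path_append tsem_append)
      then show ?thesis by blast
    qed
  qed
qed

lemma is_trace_accelerated_cfa:
  assumes "is_trace P \<rho>"
  shows "is_trace (accelerated_cfa P k hds pih) \<rho>"
proof -
  obtain V E v0 where P: "P = (V, E, v0)" by (cases P) auto
  with assms obtain u w where "u \<in> V" "path E u \<rho> w" by (auto simp: is_trace_def)
  moreover from this have "path (lift_edges E \<union> acc_edges k hds pih) (Inl u) \<rho> (Inl w)"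
    by (intro path_lift_edges) auto
  ultimately show ?thesis by (auto simp: P accelerated_cfa_eq is_trace_def)
qed

lemma accelerated_accepted_trace_realized:
  assumes loops: "\<forall>j < k. looping_trace P (hds j) (pi j)"
    and accs: "\<forall>j < k. tsem (pih j) \<subseteq> (\<Union>n. tsem (pi j) ^^ n)"
    and "accelerated_accepted_trace P k hds pih \<rho>1" and "(\<sigma>0, \<sigma>) \<in> tsem \<rho>1"
  shows "\<exists>\<rho>2. accepted P \<rho>2 \<and> (\<sigma>0, \<sigma>) \<in> tsem \<rho>2"
proof -
  obtain V E v0 where P: "P = (V, E, v0)" by (cases P) auto
  have realized: "\<exists>\<rho>. path E (hds j) \<rho> (hds j) \<and> (\<sigma>, \<sigma>') \<in> tsem \<rho>"
    if "j < k" "(\<sigma>, \<sigma>') \<in> tsem (pih j)" for j \<sigma> \<sigma>'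
    using accelerated_step_realized_by_loop[of E "hds j" "pi j" "pih j"] loops accs that
    by (simp add: P looping_trace_def)
  from assms(3,4) obtain es w where "path_e (lift_edges E \<union> acc_edges k hds pih) (Inl v0) es (Inl w)"
    "(\<sigma>0, \<sigma>) \<in> tsem (map (fst \<circ> snd) es)"
    unfolding accelerated_accepted_trace_def P accelerated_cfa_eq by auto
  then obtain \<rho>2 where "path E v0 \<rho>2 w" "(\<sigma>0, \<sigma>) \<in> tsem \<rho>2"
    using accelerated_path_simulation[where E = E and hds = hds and pih = pih, OF realized] by blast
  then show ?thesis by (auto simp: P accepted_def)
qed

theorem theorem1:
  fixes P :: "('v, 'x :: finite, 'd) cfa"
    and k :: nat and hds :: "nat \<Rightarrow> 'v" and pi pih :: "nat \<Rightarrow> ('x, 'd) stmt list"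
  assumes "is_cfa P"
    and "\<forall>j < k. looping_trace P (hds j) (pi j)"
    and "\<forall>j < k. accelerator (pi j) (pih j) \<or> under_accelerator (pi j) (pih j)"
  shows "(\<forall>\<rho>. is_trace P \<rho> \<longrightarrow>
            (\<exists>\<rho>'. is_trace (accelerated_cfa P k hds pih) \<rho>' \<and> subsumed \<rho> \<rho>'))
       \<and> (\<forall>\<rho>1 \<sigma>0 \<sigma>. accelerated_accepted_trace P k hds pih \<rho>1 \<and> (\<sigma>0, \<sigma>) \<in> tsem \<rho>1 \<longrightarrow>
            (\<exists>\<rho>2. accepted P \<rho>2 \<and> (\<sigma>0, \<sigma>) \<in> tsem \<rho>2))"
proof (intro conjI allI impI)
  fix \<rho> assume "is_trace P \<rho>"
  then show "\<exists>\<rho>'. is_trace (accelerated_cfa P k hds pih) \<rho>' \<and> subsumed \<rho> \<rho>'"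
    by (intro exI[of _ \<rho>]) (simp add: is_trace_accelerated_cfa subsumed_def)
next
  have "\<forall>j < k. tsem (pih j) \<subseteq> (\<Union>n. tsem (pi j) ^^ n)"
    using assms(3) accelerator_tsem_subset under_accelerator_tsem_subset by metis
  then show "\<exists>\<rho>2. accepted P \<rho>2 \<and> (\<sigma>0, \<sigma>) \<in> tsem \<rho>2"
    if "accelerated_accepted_trace P k hds pih \<rho>1 \<and> (\<sigma>0, \<sigma>) \<in> tsem \<rho>1" for \<rho>1 \<sigma>0 \<sigma>
    using accelerated_accepted_trace_realized assms(2) that by blast
qed

end
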